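(* Fix $d\in\mathbb N$. Let $(g_{ij})_{i,j\in\mathbb N}$ be an infinite array of independent standard Gaussian random variables, and for each $n\ge d$ let $G=G_n=(g_{ij})_{i\le d,\,j\le n}$ be the $d\times n$ matrix (viewed as a linear map $\mathbb R^n\to\mathbb R^d$) and $I^*=I_n^*=(GG^* )^{-1/2}G:\mathbb R^n\to\mathbb R^d$. Then, almost surely, $$\mathrm{d}_H\Big(\tfrac{1}{\sqrt n}\,I^*([-1,1]^n),\ \mathbb B_2^d\big(0,\sqrt{2/\pi}\big)\Big)\longrightarrow 0\quad\text{as } n\to\infty.$$
   Context: $G^*$ denotes the transpose of $G$, and $(GG^* )^{-1/2}$ is the inverse of the positive definite square root of $GG^*$ (which is almost surely invertible). $\mathbb B_2^d(0,r)$ is the closed Euclidean ball in $\mathbb R^d$ centered at $0$ with radius $r$. For compact sets $A,B\subseteq\mathbb R^d$, the Hausdorff distance is $\mathrm{d}_H(A,B)=\max\{\inf\{r\ge0: A\subseteq B+\mathbb B_2^d(0,r)\},\ \inf\{r\ge0: B\subseteq A+\mathbb B_2^d(0,r)\}\}$, where $+$ denotes Minkowski sum. *)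

theory Defs
  imports "HOL-Probability.Probability"
begin

definition ball_thicken :: "'a::real_normed_vector set \<Rightarrow> real \<Rightarrow> 'a set" where
  "ball_thicken B r = {b + e | b e. b \<in> B \<and> e \<in> cball 0 r}"

definition hausdorff_dist :: "'a::real_normed_vector set \<Rightarrow> 'a set \<Rightarrow> real" where
  "hausdorff_dist A B =
     max (Inf {r. r \<ge> 0 \<and> A \<subseteq> ball_thicken B r}) (Inf {r. r \<ge> 0 \<and> B \<subseteq> ball_thicken A r})"

definition pos_def_mat :: "real^'d^'d \<Rightarrow> bool" where
  "pos_def_mat R \<longleftrightarrow> transpose R = R \<and> (\<forall>x. x \<noteq> 0 \<longrightarrow> x \<bullet> (R *v x) > 0)"

definition pd_sqrt :: "real^'d^'d \<Rightarrow> real^'d^'d" where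
  "pd_sqrt A = (THE R. pos_def_mat R \<and> R ** R = A)"

text \<open>The d x n Gaussian matrix G_n (rows indexed by the finite type 'd, d = CARD('d)),
  as a linear map R^n -> R^d, where vectors of R^n are functions nat => real
  (only coordinates j < n matter).\<close>
definition G_map :: "('d \<Rightarrow> nat \<Rightarrow> 'w \<Rightarrow> real) \<Rightarrow> nat \<Rightarrow> 'w \<Rightarrow> (nat \<Rightarrow> real) \<Rightarrow> real^'d" where
  "G_map g n \<omega> x = (\<chi> i. \<Sum>j<n. g i j \<omega> * x j)"

definition GGt :: "('d \<Rightarrow> nat \<Rightarrow> 'w \<Rightarrow> real) \<Rightarrow> nat \<Rightarrow> 'w \<Rightarrow> real^'d^'d" where
  "GGt g n \<omega> = (\<chi> i k. \<Sum>j<n. g i j \<omega> * g k j \<omega>)"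

definition I_star :: "('d \<Rightarrow> nat \<Rightarrow> 'w \<Rightarrow> real) \<Rightarrow> nat \<Rightarrow> 'w \<Rightarrow> (nat \<Rightarrow> real) \<Rightarrow> real^'d" where
  "I_star g n \<omega> x = matrix_inv (pd_sqrt (GGt g n \<omega>)) *v G_map g n \<omega> x"

definition cube :: "nat \<Rightarrow> (nat \<Rightarrow> real) set" where
  "cube n = {x. (\<forall>j<n. \<bar>x j\<bar> \<le> 1) \<and> (\<forall>j\<ge>n. x j = 0)}"

end

theory Submission
  imports Defs "HOL-Library.Discrete_Functions" "HOL-Real_Asymp.Real_Asymp"
begin

text \<open>
  With \<open>h\<^sub>n(\<theta>) = \<parallel>G\<^sup>T\<theta>\<parallel>\<^sub>1 / n\<close>, the support function of \<open>G([-1,1]\<^sup>n) / n\<close>, the strong law of large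
  numbers applied to the i.i.d. variables \<open>|\<langle>\<theta>, g\<^sub>j\<rangle>|\<close> and \<open>\<langle>\<theta>, g\<^sub>j\<rangle>\<^sup>2\<close> (with \<open>\<langle>\<theta>, g\<^sub>j\<rangle> \<sim> N(0, |\<theta>|\<^sup>2)\<close>)
  gives, almost surely and simultaneously for \<open>\<theta>\<close> in a countable dense set,
  \<open>h\<^sub>n(\<theta>) \<rightarrow> \<surd>(2/\<pi>) |\<theta>|\<close> and \<open>GG\<^sup>T/n \<rightarrow> I\<close>. The \<open>h\<^sub>n\<close> are seminorms, so the first convergence is
  uniform on the sphere. Writing \<open>(GG\<^sup>T)\<^sup>1\<^sup>/\<^sup>2 = \<surd>n (I + X\<^sub>n)\<close> with \<open>X\<^sub>n \<rightarrow> 0\<close>, the set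
  \<open>K\<^sub>n = I\<^sup>*([-1,1]\<^sup>n) / \<surd>n\<close> satisfies \<open>(I + X\<^sub>n) K\<^sub>n = G([-1,1]\<^sup>n) / n\<close>. Hence, if \<open>|h\<^sub>n(\<theta>) - c|\<theta>|| \<le> \<epsilon>|\<theta>|\<close>
  with \<open>c = \<surd>(2/\<pi>)\<close> and \<open>\<parallel>X\<^sub>n\<parallel> \<le> \<delta>\<close>, the convex set \<open>K\<^sub>n\<close> has points of norm at most
  \<open>(c + \<epsilon>)/(1 - \<delta>)\<close> and support function at least \<open>(c - \<epsilon>)/(1 + \<delta>) |a|\<close>, which squeezes it
  between two balls of radius close to \<open>c\<close>.
\<close>

section \<open>A strong law of large numbers\<close>

lemma filterlim_floor_sqrt_at_top: "filterlim floor_sqrt at_top sequentially"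
  unfolding filterlim_at_top
proof
  fix m :: nat
  show "eventually (\<lambda>n. m \<le> floor_sqrt n) sequentially"
    using eventually_ge_at_top[of "m^2"] by eventually_elim (simp add: le_floor_sqrt_iff)
qed

lemma floor_sqrt_power2_ratio_tendsto:
  shows "(\<lambda>n. real (floor_sqrt n)^2 / real n) \<longlonglongrightarrow> 1"
    and "(\<lambda>n. real (floor_sqrt n + 1)^2 / real n) \<longlonglongrightarrow> 1"
proof -
  define r where "r n = floor_sqrt n" for n
  define e where "e n = (2 * sqrt (real n) + 1) / real n" for n
  have r_sq: "real (r n)^2 \<le> real n" "real n < real (r n + 1)^2" for n
    unfolding r_def of_nat_power[symmetric] of_nat_le_iff of_nat_less_iff
    using floor_sqrt_power2_le[of n] Suc_floor_sqrt_power2_gt[of n] by simp_all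
  \<comment> \<open>The squares around \<open>n\<close> differ by \<open>2 r + 1 \<le> 2 \<surd>n + 1\<close>, so both are \<open>n (1 + o(1))\<close>.\<close>
  have bounds: "1 - e n \<le> real (r n)^2 / real n" "real (r n)^2 / real n \<le> 1"
    "1 \<le> real (r n + 1)^2 / real n" "real (r n + 1)^2 / real n \<le> 1 + e n" if "0 < n" for n
  proof -
    have "real (r n) \<le> sqrt (real n)" using r_sq(1)[of n] real_le_rsqrt by blast
    moreover have "real (r n + 1)^2 = real (r n)^2 + 2 * real (r n) + 1"
      by (simp add: power2_eq_square algebra_simps)
    ultimately have "real (r n + 1)^2 \<le> real n + (2 * sqrt (real n) + 1)"
      "real n - (2 * sqrt (real n) + 1) \<le> real (r n)^2"
      using r_sq[of n] by linarith+
    moreover have "1 - e n = (real n - (2 * sqrt (real n) + 1)) / real n"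
      "1 + e n = (real n + (2 * sqrt (real n) + 1)) / real n"
      using that by (simp_all add: e_def field_simps)
    ultimately show "1 - e n \<le> real (r n)^2 / real n" "real (r n + 1)^2 / real n \<le> 1 + e n"
      by (simp_all add: divide_right_mono)
    show "real (r n)^2 / real n \<le> 1" "1 \<le> real (r n + 1)^2 / real n"
      using that r_sq[of n] by simp_all
  qed
  have "e \<longlonglongrightarrow> 0" unfolding e_def by real_asymp
  then have lim_lower: "(\<lambda>n. 1 - e n) \<longlonglongrightarrow> 1" and lim_upper: "(\<lambda>n. 1 + e n) \<longlonglongrightarrow> 1"
    using tendsto_diff[OF tendsto_const, of e 0 _ 1] tendsto_add[OF tendsto_const, of e 0 _ 1] by simp_all
  note ev = eventually_mono[OF eventually_gt_at_top[of 0]]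
  show "(\<lambda>n. real (floor_sqrt n)^2 / real n) \<longlonglongrightarrow> 1"
    unfolding r_def[symmetric]
    by (rule tendsto_sandwich[OF _ _ lim_lower tendsto_const]) (rule ev, erule bounds)+
  show "(\<lambda>n. real (floor_sqrt n + 1)^2 / real n) \<longlonglongrightarrow> 1"
    unfolding r_def[symmetric]
    by (rule tendsto_sandwich[OF _ _ tendsto_const lim_upper]) (rule ev, erule bounds)+
qed

lemma averages_tendsto_if_square_averages_tendsto:
  fixes a :: "nat \<Rightarrow> real"
  assumes nonneg: "\<And>j. 0 \<le> a j"
    and squares: "(\<lambda>k. (\<Sum>j<k^2. a j) / real (k^2)) \<longlonglongrightarrow> \<mu>"
  shows "(\<lambda>n. (\<Sum>j<n. a j) / real n) \<longlonglongrightarrow> \<mu>"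
proof -
  define S where "S n = (\<Sum>j<n. a j)" for n
  define u where "u k = S (k^2) / real (k^2)" for k
  define r where "r n = floor_sqrt n" for n
  have S_mono: "S m \<le> S n" if "m \<le> n" for m n
    unfolding S_def using that by (intro sum_mono2) (auto simp: nonneg)
  have r_at_top: "filterlim r at_top sequentially"
    unfolding r_def by (rule filterlim_floor_sqrt_at_top)
  have lower: "(\<lambda>n. u (r n) * (real (r n)^2 / real n)) \<longlonglongrightarrow> \<mu>"
    using tendsto_mult[OF filterlim_compose[OF squares r_at_top] floor_sqrt_power2_ratio_tendsto(1)]
    by (simp add: u_def S_def r_def)
  have upper: "(\<lambda>n. u (r n + 1) * (real (r n + 1)^2 / real n)) \<longlonglongrightarrow> \<mu>"
    using tendsto_mult[OF filterlim_compose[OF squares filterlim_compose[OF filterlim_Suc r_at_top]]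
        floor_sqrt_power2_ratio_tendsto(2)]
    by (simp add: u_def S_def r_def o_def)
  show ?thesis
  proof (rule tendsto_sandwich[OF _ _ lower upper])
    have "u (r n) * (real (r n)^2 / real n) \<le> S n / real n"
         "S n / real n \<le> u (r n + 1) * (real (r n + 1)^2 / real n)" if "0 < r n" for n
      using that S_mono[of "(r n)^2" n] S_mono[of n "(r n + 1)^2"] floor_sqrt_power2_le[of n]
        Suc_floor_sqrt_power2_gt[of n]
      by (auto simp: u_def r_def intro!: divide_right_mono)
    moreover have "eventually (\<lambda>n. 0 < r n) sequentially"
      using eventually_gt_at_top[of 0] by eventually_elim (simp add: r_def)
    ultimately show "eventually (\<lambda>n. u (r n) * (real (r n)^2 / real n) \<le> (\<Sum>j<n. a j) / real n) sequentially"
      "eventually (\<lambda>n. (\<Sum>j<n. a j) / real n \<le> u (r n + 1) * (real (r n + 1)^2 / real n)) sequentially"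
      unfolding S_def by (auto elim: eventually_mono)
  qed
qed

lemma (in prob_space) AE_tendsto_0_if_summable_expectation:
  fixes W :: "nat \<Rightarrow> 'a \<Rightarrow> real"
  assumes nonneg: "\<And>k x. 0 \<le> W k x" and int: "\<And>k. integrable M (W k)"
    and summable: "summable (\<lambda>k. expectation (W k))"
  shows "AE x in M. (\<lambda>k. W k x) \<longlonglongrightarrow> 0"
proof -
  have meas: "W k \<in> borel_measurable M" for k using int by (rule borel_measurable_integrable)
  have "(\<integral>\<^sup>+x. (\<Sum>k. ennreal (W k x)) \<partial>M) = (\<Sum>k. \<integral>\<^sup>+x. ennreal (W k x) \<partial>M)"
    by (rule nn_integral_suminf) (use meas in measurable)
  also have "\<dots> = (\<Sum>k. ennreal (expectation (W k)))"
    by (subst nn_integral_eq_integral) (auto simp: int nonneg)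
  also have "\<dots> = ennreal (\<Sum>k. expectation (W k))"
    by (rule suminf_ennreal2[OF _ summable]) (simp add: nonneg)
  finally have "(\<integral>\<^sup>+x. (\<Sum>k. ennreal (W k x)) \<partial>M) \<noteq> \<infinity>" by simp
  then have "AE x in M. (\<Sum>k. ennreal (W k x)) \<noteq> \<infinity>"
    by (rule nn_integral_PInf_AE[rotated]) (use meas in measurable)
  then show ?thesis
  proof eventually_elim
    case (elim x)
    then have "summable (\<lambda>k. W k x)" using summable_suminf_not_top[OF nonneg] by simp
    then show ?case by (rule summable_LIMSEQ_zero)
  qed
qed

lemma (in prob_space) expectation_square_sum_indep:
  fixes Z :: "'i \<Rightarrow> 'a \<Rightarrow> real"
  assumes indep: "indep_vars (\<lambda>_. borel) Z I" and "finite J" "J \<subseteq> I"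
    and sq_int: "\<And>i. i \<in> I \<Longrightarrow> integrable M (\<lambda>x. (Z i x)^2)"
    and centered: "\<And>i. i \<in> I \<Longrightarrow> expectation (Z i) = 0"
  shows "integrable M (\<lambda>x. (\<Sum>j\<in>J. Z j x)^2)"
    and "expectation (\<lambda>x. (\<Sum>j\<in>J. Z j x)^2) = (\<Sum>j\<in>J. expectation (\<lambda>x. (Z j x)^2))"
proof -
  have int: "integrable M (Z i)" if "i \<in> I" for i
    using indep that sq_int[OF that] unfolding indep_vars_def
    by (auto intro: square_integrable_imp_integrable)
  have off_diag: "integrable M (\<lambda>x. Z j x * Z k x) \<and> expectation (\<lambda>x. Z j x * Z k x) = 0"
    if "j \<in> I" "k \<in> I" "j \<noteq> k" for j k
  proof -
    have indep2: "indep_vars (\<lambda>_. borel) Z {j, k}" using that by (intro indep_vars_subset[OF indep]) auto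
    have "integrable M (\<lambda>x. \<Prod>i\<in>{j, k}. Z i x)"
      "expectation (\<lambda>x. \<Prod>i\<in>{j, k}. Z i x) = (\<Prod>i\<in>{j, k}. expectation (Z i))"
      using indep_vars_integrable[OF _ indep2] indep_vars_lebesgue_integral[OF _ indep2] that int
      by auto
    then show ?thesis using that centered by simp
  qed
  have pair_int: "integrable M (\<lambda>x. Z j x * Z k x)" if "j \<in> J" "k \<in> J" for j k
    using that \<open>J \<subseteq> I\<close> sq_int off_diag by (cases "j = k") (auto simp: power2_eq_square subsetD)
  have pair_exp: "expectation (\<lambda>x. Z j x * Z k x) = (if j = k then expectation (\<lambda>x. (Z j x)^2) else 0)"
    if "j \<in> J" "k \<in> J" for j k
    using that \<open>J \<subseteq> I\<close> off_diag by (auto simp: power2_eq_square subsetD)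
  have expand: "(\<Sum>j\<in>J. Z j x)^2 = (\<Sum>j\<in>J. \<Sum>k\<in>J. Z j x * Z k x)" for x
    by (simp add: power2_eq_square sum_product)
  show "integrable M (\<lambda>x. (\<Sum>j\<in>J. Z j x)^2)"
    unfolding expand by (intro Bochner_Integration.integrable_sum pair_int)
  have "expectation (\<lambda>x. (\<Sum>j\<in>J. Z j x)^2) = (\<Sum>j\<in>J. \<Sum>k\<in>J. expectation (\<lambda>x. Z j x * Z k x))"
    unfolding expand
    by (simp add: Bochner_Integration.integral_sum pair_int)
  also have "\<dots> = (\<Sum>j\<in>J. expectation (\<lambda>x. (Z j x)^2))"
    using \<open>finite J\<close> by (simp add: pair_exp if_distrib cong: sum.cong)
  finally show "expectation (\<lambda>x. (\<Sum>j\<in>J. Z j x)^2) = (\<Sum>j\<in>J. expectation (\<lambda>x. (Z j x)^2))" .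
qed

text \<open>The averages along the squares have mean squares \<open>O(1/k\<^sup>2)\<close>, which are summable.\<close>
lemma (in prob_space) AE_square_averages_tendsto_0:
  fixes Z :: "nat \<Rightarrow> 'a \<Rightarrow> real"
  assumes indep: "indep_vars (\<lambda>_. borel) Z UNIV"
    and sq_int: "\<And>j. integrable M (\<lambda>x. (Z j x)^2)"
    and centered: "\<And>j. expectation (Z j) = 0"
    and variance: "\<And>j. expectation (\<lambda>x. (Z j x)^2) \<le> C"
  shows "AE x in M. (\<lambda>k. (\<Sum>j<k^2. Z j x) / real (k^2)) \<longlonglongrightarrow> 0"
proof -
  define W where "W k x = ((\<Sum>j<k^2. Z j x) / real (k^2))^2" for k x
  have W_int: "integrable M (W k)" for k
    unfolding W_def power_divide
    using expectation_square_sum_indep(1)[OF indep _ _ sq_int centered] by simp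
  have W_exp: "expectation (W k) \<le> C * inverse (real k ^ 2)" for k
  proof -
    have "expectation (W k) = (\<Sum>j<k^2. expectation (\<lambda>x. (Z j x)^2)) / real k ^ 4"
      unfolding W_def power_divide
      using expectation_square_sum_indep(2)[OF indep _ _ sq_int centered] by simp
    also have "\<dots> \<le> (real k ^ 2 * C) / real k ^ 4"
      using sum_mono[of "{..<k^2}", OF variance] by (intro divide_right_mono) auto
    also have "\<dots> = C * inverse (real k ^ 2)"
      by (cases "k = 0") (simp_all add: field_simps)
    finally show ?thesis .
  qed
  have "summable (\<lambda>k. C * inverse (real k ^ 2))"
    by (intro summable_mult inverse_power_summable) simp
  then have "summable (\<lambda>k. expectation (W k))"
    by (rule summable_comparison_test'[where N = 0]) (simp add: W_exp W_def)
  then have "AE x in M. (\<lambda>k. W k x) \<longlonglongrightarrow> 0"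
    by (intro AE_tendsto_0_if_summable_expectation W_int) (simp add: W_def)
  then show ?thesis
  proof eventually_elim
    case (elim x)
    then have "(\<lambda>k. \<bar>(\<Sum>j<k^2. Z j x) / real (k^2)\<bar>) \<longlonglongrightarrow> 0"
      using tendsto_real_sqrt[OF elim] by (simp add: W_def)
    then show ?case by (rule tendsto_rabs_zero_cancel)
  qed
qed

lemma (in prob_space) strong_law_nonneg:
  fixes Y :: "nat \<Rightarrow> 'a \<Rightarrow> real"
  assumes indep: "indep_vars (\<lambda>_. borel) Y UNIV"
    and nonneg: "\<And>j x. 0 \<le> Y j x"
    and sq_int: "\<And>j. integrable M (\<lambda>x. (Y j x)^2)"
    and mean: "\<And>j. expectation (Y j) = \<mu>"
    and second_moment: "\<And>j. expectation (\<lambda>x. (Y j x)^2) \<le> C"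
  shows "AE x in M. (\<lambda>n. (\<Sum>j<n. Y j x) / real n) \<longlonglongrightarrow> \<mu>"
proof -
  have int: "integrable M (Y j)" for j
    using indep sq_int[of j] unfolding indep_vars_def by (auto intro: square_integrable_imp_integrable)
  define Z where "Z j x = Y j x - \<mu>" for j x
  have Z_sq: "(Z j x)^2 = (Y j x)^2 - 2 * \<mu> * Y j x + \<mu>^2" for j x
    unfolding Z_def by (simp add: power2_diff)
  have "expectation (\<lambda>x. (Z j x)^2) \<le> C" for j
  proof -
    have "expectation (\<lambda>x. (Z j x)^2) = expectation (\<lambda>x. (Y j x)^2) - \<mu>^2"
      unfolding Z_sq using sq_int[of j] int[of j] mean[of j] by (simp add: prob_space power2_eq_square)
    then show ?thesis using second_moment[of j] zero_le_power2[of \<mu>] by linarith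
  qed
  moreover have "indep_vars (\<lambda>_. borel) Z UNIV"
    unfolding Z_def by (rule indep_vars_compose2[OF indep, of "\<lambda>j y. y - \<mu>"]) simp
  moreover have "integrable M (\<lambda>x. (Z j x)^2)" for j
    unfolding Z_sq using sq_int[of j] int[of j] by auto
  moreover have "expectation (Z j) = 0" for j
    unfolding Z_def using int[of j] mean[of j] by (simp add: prob_space)
  ultimately have "AE x in M. (\<lambda>k. (\<Sum>j<k^2. Z j x) / real (k^2)) \<longlonglongrightarrow> 0"
    by (intro AE_square_averages_tendsto_0)
  then show ?thesis
  proof eventually_elim
    case (elim x)
    from tendsto_add[OF elim tendsto_const[of \<mu>]]
    have "(\<lambda>k. (\<Sum>j<k^2. Z j x) / real (k^2) + \<mu>) \<longlonglongrightarrow> \<mu>" by simp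
    moreover have "eventually (\<lambda>k. (\<Sum>j<k^2. Z j x) / real (k^2) + \<mu> = (\<Sum>j<k^2. Y j x) / real (k^2))
        sequentially"
      using eventually_gt_at_top[of 0]
      by eventually_elim (simp add: Z_def sum_subtractf divide_simps)
    ultimately have "(\<lambda>k. (\<Sum>j<k^2. Y j x) / real (k^2)) \<longlonglongrightarrow> \<mu>"
      by (rule Lim_transform_eventually)
    then show ?case by (rule averages_tendsto_if_square_averages_tendsto[OF nonneg])
  qed
qed

section \<open>Gaussian projections\<close>

lemma (in prob_space) indep_vars_columns:
  fixes X :: "'i \<times> 'j \<Rightarrow> 'a \<Rightarrow> real"
  assumes indep: "indep_vars (\<lambda>_. borel) X UNIV"
    and F: "F \<in> borel_measurable (PiM UNIV (\<lambda>_. borel))"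
  shows "indep_vars (\<lambda>_. borel) (\<lambda>j x. F (\<lambda>i. X (i, j) x)) UNIV"
proof -
  define K where "K j = {p :: 'i \<times> 'j. snd p = j}" for j
  have "indep_vars (\<lambda>j. PiM (K j) (\<lambda>_. borel)) (\<lambda>j x. restrict (\<lambda>p. X p x) (K j)) UNIV"
    by (rule indep_vars_restrict[OF indep]) (auto simp: K_def disjoint_family_on_def)
  moreover have "(\<lambda>h. F (\<lambda>i. h (i, j))) \<in> borel_measurable (PiM (K j) (\<lambda>_. borel))" for j
  proof -
    have "(\<lambda>h i. h (i, j)) \<in> measurable (PiM (K j) (\<lambda>_. borel)) (PiM UNIV (\<lambda>_. borel))"
      by (rule measurable_PiM_single') (auto simp: K_def intro!: measurable_component_singleton)
    from measurable_compose[OF this F] show ?thesis by (simp add: o_def)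
  qed
  ultimately have "indep_vars (\<lambda>_. borel) (\<lambda>j x. F (\<lambda>i. restrict (\<lambda>p. X p x) (K j) (i, j))) UNIV"
    by (rule indep_vars_compose2)
  then show ?thesis by (simp add: K_def)
qed

lemma (in prob_space) indep_vars_row:
  fixes X :: "'i \<times> 'j \<Rightarrow> 'a \<Rightarrow> real"
  assumes indep: "indep_vars (\<lambda>_. borel) X UNIV"
  shows "indep_vars (\<lambda>_. borel) (\<lambda>i. X (i, j)) UNIV"
proof -
  define K where "K i = {(i, j)}" for i :: 'i
  have "indep_vars (\<lambda>i. PiM (K i) (\<lambda>_. borel)) (\<lambda>i x. restrict (\<lambda>p. X p x) (K i)) UNIV"
    by (rule indep_vars_restrict[OF indep]) (auto simp: K_def disjoint_family_on_def)
  moreover have "(\<lambda>h. h (i, j)) \<in> borel_measurable (PiM (K i) (\<lambda>_. borel))" for i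
    by (rule measurable_component_singleton) (simp add: K_def)
  ultimately have "indep_vars (\<lambda>_. borel) (\<lambda>i x. restrict (\<lambda>p. X p x) (K i) (i, j)) UNIV"
    by (rule indep_vars_compose2)
  then show ?thesis by (simp add: K_def)
qed

lemma (in prob_space) distributed_std_normal_combination:
  fixes X :: "'i::finite \<Rightarrow> 'a \<Rightarrow> real" and \<theta> :: "real^'i"
  assumes indep: "indep_vars (\<lambda>_. borel) X UNIV"
    and std: "\<And>i. distributed M lborel (X i) std_normal_density"
    and "\<theta> \<noteq> 0"
  shows "distributed M lborel (\<lambda>x. \<Sum>i\<in>UNIV. \<theta>$i * X i x) (normal_density 0 (norm \<theta>))"
proof -
  define I where "I = {i. \<theta>$i \<noteq> 0}"
  have "I \<noteq> {}" using \<open>\<theta> \<noteq> 0\<close> by (auto simp: I_def vec_eq_iff)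
  moreover have "indep_vars (\<lambda>_. borel) (\<lambda>i x. \<theta>$i * X i x) I"
    by (rule indep_vars_subset[OF indep_vars_compose2[OF indep, of "\<lambda>i y. \<theta>$i * y"]]) auto
  moreover have "distributed M lborel (\<lambda>x. \<theta>$i * X i x) (normal_density 0 \<bar>\<theta>$i\<bar>)" if "i \<in> I" for i
    using normal_density_affine[OF std[of i], of "\<theta>$i" 0] that by (simp add: I_def)
  ultimately have "distributed M lborel (\<lambda>x. \<Sum>i\<in>I. \<theta>$i * X i x)
      (normal_density (\<Sum>i\<in>I. 0) (sqrt (\<Sum>i\<in>I. \<bar>\<theta>$i\<bar>^2)))"
    by (intro sum_indep_normal) (auto simp: I_def)
  moreover have "(\<Sum>i\<in>I. \<theta>$i * X i x) = (\<Sum>i\<in>UNIV. \<theta>$i * X i x)" for x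
    by (intro sum.mono_neutral_left) (auto simp: I_def)
  moreover have "(\<Sum>i\<in>I. \<bar>\<theta>$i\<bar>^2) = (\<Sum>i\<in>UNIV. \<bar>\<theta>$i\<bar>^2)"
    by (intro sum.mono_neutral_left) (auto simp: I_def)
  ultimately show ?thesis by (simp add: norm_vec_def L2_set_def)
qed

lemma (in prob_space) centered_normal_moments:
  assumes D: "distributed M lborel X (normal_density 0 \<sigma>)" and "0 < \<sigma>"
  shows "integrable M (\<lambda>x. (X x)^2)" "integrable M (\<lambda>x. (X x)^4)"
    and "expectation (\<lambda>x. \<bar>X x\<bar>) = \<sigma> * sqrt (2 / pi)"
    and "expectation (\<lambda>x. (X x)^2) = \<sigma>^2"
    and "expectation (\<lambda>x. (X x)^4) = 3 * \<sigma>^4"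
proof -
  have nonneg: "0 \<le> normal_density 0 \<sigma> x" for x by (simp add: normal_density_nonneg)
  show "integrable M (\<lambda>x. (X x)^2)" "integrable M (\<lambda>x. (X x)^4)"
    using distributed_integrable[OF D, of "\<lambda>x. x^2"] distributed_integrable[OF D, of "\<lambda>x. x^4"]
      integrable_normal_moment[OF \<open>0 < \<sigma>\<close>, of 0 2] integrable_normal_moment[OF \<open>0 < \<sigma>\<close>, of 0 4]
    by (simp_all add: nonneg)
  show "expectation (\<lambda>x. \<bar>X x\<bar>) = \<sigma> * sqrt (2 / pi)"
    using distributed_integral[OF D, of "\<lambda>x. \<bar>x\<bar>"] integral_normal_moment_abs_odd[OF \<open>0 < \<sigma>\<close>, of 0 0]
    by (simp add: nonneg)
  show "expectation (\<lambda>x. (X x)^2) = \<sigma>^2"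
    using distributed_integral[OF D, of "\<lambda>x. x^2"] integral_normal_moment_even[OF \<open>0 < \<sigma>\<close>, of 0 1]
    by (simp add: nonneg)
  have "fact (2 * 2) / ((2 / \<sigma>^2)^2 * fact 2) = 3 * \<sigma>^4"
    using \<open>0 < \<sigma>\<close> by (simp add: fact_numeral field_simps power4_eq_xxxx power2_eq_square)
  then show "expectation (\<lambda>x. (X x)^4) = 3 * \<sigma>^4"
    using distributed_integral[OF D, of "\<lambda>x. x^4"] integral_normal_moment_even[OF \<open>0 < \<sigma>\<close>, of 0 2]
    by (simp add: nonneg)
qed

section \<open>Seminorms converging on a dense set\<close>

lemma seminorm_nonneg:
  fixes p :: "'a::real_vector \<Rightarrow> real"
  assumes add: "\<And>x y. p (x + y) \<le> p x + p y" and scale: "\<And>r x. p (r *\<^sub>R x) = \<bar>r\<bar> * p x"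
  shows "0 \<le> p x"
  using add[of x "- x"] scale[of 0 x] scale[of "-1" x] by simp

lemma seminorm_le_norm_mult_sum_Basis:
  fixes p :: "'a::euclidean_space \<Rightarrow> real"
  assumes add: "\<And>x y. p (x + y) \<le> p x + p y" and scale: "\<And>r x. p (r *\<^sub>R x) = \<bar>r\<bar> * p x"
  shows "p x \<le> norm x * (\<Sum>b\<in>Basis. p b)"
proof -
  note nonneg = seminorm_nonneg[of p, OF add scale]
  have sum_le: "p (\<Sum>b\<in>B. f b) \<le> (\<Sum>b\<in>B. p (f b))" if "finite B" for B and f :: "'a \<Rightarrow> 'a"
    using that
  proof (induction B rule: finite_induct)
    case (insert b B)
    then show ?case using add[of "f b" "sum f B"] by simp
  qed (use scale[of 0 0] in simp)
  have "p x = p (\<Sum>b\<in>Basis. (x \<bullet> b) *\<^sub>R b)" by (simp add: euclidean_representation)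
  also have "\<dots> \<le> (\<Sum>b\<in>Basis. \<bar>x \<bullet> b\<bar> * p b)" using sum_le[of Basis "\<lambda>b. (x \<bullet> b) *\<^sub>R b"] by (simp add: scale)
  also have "\<dots> \<le> (\<Sum>b\<in>Basis. norm x * p b)"
    by (intro sum_mono mult_right_mono Basis_le_norm nonneg)
  finally show ?thesis by (simp add: sum_distrib_left)
qed

lemma seminorm_diff_le:
  fixes p :: "'a::real_vector \<Rightarrow> real"
  assumes add: "\<And>x y. p (x + y) \<le> p x + p y" and scale: "\<And>r x. p (r *\<^sub>R x) = \<bar>r\<bar> * p x"
  shows "\<bar>p x - p y\<bar> \<le> p (x - y)"
  using add[of "x - y" y] add[of "y - x" x] scale[of "-1" "x - y"] by simp

lemma seminorm_close_to_norm_if_close_on_net: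
  fixes p :: "'a::euclidean_space \<Rightarrow> real"
  assumes add: "\<And>x y. p (x + y) \<le> p x + p y" and scale: "\<And>r x. p (r *\<^sub>R x) = \<bar>r\<bar> * p x"
    and net: "sphere 0 1 \<subseteq> (\<Union>q\<in>F. ball q \<delta>)"
    and close: "\<And>q. q \<in> F \<Longrightarrow> \<bar>p q - c * norm q\<bar> \<le> \<epsilon>" and "0 \<le> c"
  shows "\<bar>p x - c * norm x\<bar> \<le> (\<delta> * (\<Sum>b\<in>Basis. p b) + \<epsilon> + \<delta> * c) * norm x"
proof -
  have unit: "\<bar>p u - c\<bar> \<le> \<delta> * (\<Sum>b\<in>Basis. p b) + \<epsilon> + \<delta> * c" if u: "norm u = 1" for u
  proof -
    obtain q where q: "q \<in> F" "dist q u < \<delta>" using net u by fastforce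
    have "0 \<le> (\<Sum>b\<in>Basis. p b)"
      using seminorm_nonneg[of p, OF add scale] by (simp add: sum_nonneg)
    have "\<bar>p u - p q\<bar> \<le> p (u - q)" by (rule seminorm_diff_le) (fact add scale)+
    also have "\<dots> \<le> norm (u - q) * (\<Sum>b\<in>Basis. p b)"
      by (rule seminorm_le_norm_mult_sum_Basis) (fact add scale)+
    also have "\<dots> \<le> \<delta> * (\<Sum>b\<in>Basis. p b)"
      using q(2) \<open>0 \<le> (\<Sum>b\<in>Basis. p b)\<close> by (intro mult_right_mono) (auto simp: dist_norm norm_minus_commute)
    finally have "\<bar>p u - p q\<bar> \<le> \<delta> * (\<Sum>b\<in>Basis. p b)" .
    moreover have "\<bar>c * norm q - c\<bar> \<le> \<delta> * c"
    proof -
      have "\<bar>c * norm q - c\<bar> = c * \<bar>norm q - norm u\<bar>"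
        using u \<open>0 \<le> c\<close> abs_mult[of c "norm q - 1"] by (simp add: right_diff_distrib)
      also have "\<dots> \<le> c * \<delta>"
        using norm_triangle_ineq3[of q u] q(2) \<open>0 \<le> c\<close> by (intro mult_left_mono) (auto simp: dist_norm)
      finally show ?thesis by (simp add: mult.commute)
    qed
    ultimately show ?thesis using close[OF q(1)] by linarith
  qed
  show ?thesis
  proof (cases "x = 0")
    case True
    then show ?thesis using scale[of 0 0] by simp
  next
    case False
    then have "p x - c * norm x = norm x * (p (x /\<^sub>R norm x) - c)"
      by (simp add: scale algebra_simps)
    then have "\<bar>p x - c * norm x\<bar> = norm x * \<bar>p (x /\<^sub>R norm x) - c\<bar>"
      by (simp add: abs_mult)
    also have "\<dots> \<le> norm x * (\<delta> * (\<Sum>b\<in>Basis. p b) + \<epsilon> + \<delta> * c)"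
      using unit[of "x /\<^sub>R norm x"] False by (simp add: mult_left_mono)
    finally show ?thesis by (simp add: mult.commute)
  qed
qed

lemma countable_dense_set_with_Basis:
  obtains D :: "'a::euclidean_space set" where "countable D" "closure D = UNIV" "Basis \<subseteq> D"
proof -
  obtain D0 :: "'a set" where "countable D0" and D0: "\<And>X. open X \<Longrightarrow> X \<noteq> {} \<Longrightarrow> \<exists>d\<in>D0. d \<in> X"
    using countable_dense_setE by blast
  have "closure (D0 \<union> Basis) = UNIV"
    using D0[of "ball _ _"] by (auto simp: closure_approachable dist_commute)
  with \<open>countable D0\<close> show ?thesis using that[of "D0 \<union> Basis"] by (simp add: countable_finite)
qed

text \<open>The basis vectors give a common Lipschitz bound for the seminorms, so convergence on a
  finite \<open>\<delta>\<close>-net of the sphere taken from the dense set suffices.\<close>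
lemma eventually_seminorms_close_to_norm:
  fixes p :: "nat \<Rightarrow> 'a::euclidean_space \<Rightarrow> real"
  assumes add: "\<And>n x y. p n (x + y) \<le> p n x + p n y"
    and scale: "\<And>n r x. p n (r *\<^sub>R x) = \<bar>r\<bar> * p n x"
    and lim: "\<And>x. x \<in> D \<Longrightarrow> (\<lambda>n. p n x) \<longlonglongrightarrow> c * norm x"
    and dense: "closure D = UNIV" and "Basis \<subseteq> D" and "0 \<le> c" and "0 < \<epsilon>"
  shows "eventually (\<lambda>n. \<forall>x. \<bar>p n x - c * norm x\<bar> \<le> \<epsilon> * norm x) sequentially"
proof -
  define B where "B = (\<Sum>b\<in>(Basis::'a set). c) + 1"
  define \<delta> where "\<delta> = \<epsilon> / (2 * (B + c))"
  have "(\<lambda>n. \<Sum>b\<in>Basis. p n b) \<longlonglongrightarrow> (\<Sum>b\<in>(Basis::'a set). c)"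
    by (intro tendsto_sum) (metis lim norm_Basis mult_1_right \<open>Basis \<subseteq> D\<close> subsetD)
  moreover have "(\<Sum>b\<in>(Basis::'a set). c) < B" by (simp add: B_def)
  ultimately have ev_B: "eventually (\<lambda>n. (\<Sum>b\<in>Basis. p n b) \<le> B) sequentially"
    by (rule order_tendstoD(2)[THEN eventually_mono]) simp
  have "0 < B" using \<open>0 \<le> c\<close> by (simp add: B_def add_nonneg_pos)
  then have "0 < \<delta>" using \<open>0 < \<epsilon>\<close> \<open>0 \<le> c\<close> by (simp add: \<delta>_def)
  have "0 < B + c" using \<open>0 < B\<close> \<open>0 \<le> c\<close> by simp
  then have "\<delta> * B + \<delta> * c = \<epsilon> / 2"
    unfolding distrib_left[symmetric] \<delta>_def by (simp add: field_simps)
  then have "\<delta> * B + \<epsilon> / 2 + \<delta> * c = \<epsilon>" by simp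
  have "\<exists>q\<in>D. dist q x < \<delta>" for x
    using closure_approachable[of x D] dense \<open>0 < \<delta>\<close> by auto
  then have "sphere (0::'a) 1 \<subseteq> (\<Union>q\<in>D. ball q \<delta>)" by auto
  then obtain F where F: "F \<subseteq> D" "finite F" "sphere (0::'a) 1 \<subseteq> (\<Union>q\<in>F. ball q \<delta>)"
    using compactE_image[OF compact_sphere, of D "\<lambda>q. ball q \<delta>"] by blast
  have ev_F: "eventually (\<lambda>n. \<forall>q\<in>F. \<bar>p n q - c * norm q\<bar> < \<epsilon> / 2) sequentially"
  proof (intro eventually_ball_finite ballI \<open>finite F\<close>)
    fix q assume "q \<in> F"
    then have "(\<lambda>n. p n q) \<longlonglongrightarrow> c * norm q" using F(1) lim by blast
    from tendstoD[OF this, of "\<epsilon> / 2"]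
    show "eventually (\<lambda>n. \<bar>p n q - c * norm q\<bar> < \<epsilon> / 2) sequentially"
      using \<open>0 < \<epsilon>\<close> by (simp add: dist_real_def)
  qed
  show ?thesis
    using ev_B ev_F
  proof eventually_elim
    case (elim n)
    have "\<delta> * (\<Sum>b\<in>Basis. p n b) + \<epsilon> / 2 + \<delta> * c \<le> \<epsilon>"
      using mult_left_mono[OF elim(1), of \<delta>] \<open>0 < \<delta>\<close> \<open>\<delta> * B + \<epsilon> / 2 + \<delta> * c = \<epsilon>\<close> by linarith
    moreover have "\<bar>p n x - c * norm x\<bar> \<le> (\<delta> * (\<Sum>b\<in>Basis. p n b) + \<epsilon> / 2 + \<delta> * c) * norm x" for x
      using elim(2) \<open>0 \<le> c\<close>
      by (intro seminorm_close_to_norm_if_close_on_net[OF add scale F(3)]) (auto simp: less_imp_le)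
    ultimately show ?case by (meson mult_right_mono norm_ge_zero order_trans)
  qed
qed

section \<open>Matrix norms and positive definite square roots\<close>

lemma norm_vec_power2: "(norm (v :: 'a::real_normed_vector^'n))^2 = (\<Sum>i\<in>UNIV. (norm (v$i))^2)"
  by (simp add: norm_vec_def L2_set_def sum_nonneg)

lemma matrix_vector_mult_norm_le: "norm ((A :: real^'n^'m) *v x) \<le> norm A * norm x"
proof -
  have "(norm (A *v x))^2 = (\<Sum>i\<in>UNIV. (A$i \<bullet> x)^2)"
    by (simp add: norm_vec_power2 matrix_vector_mul_component)
  also have "\<dots> \<le> (\<Sum>i\<in>UNIV. (norm (A$i))^2 * (norm x)^2)"
    by (intro sum_mono) (metis Cauchy_Schwarz_ineq2 abs_ge_zero power2_abs power_mono power_mult_distrib)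
  also have "\<dots> = (norm A * norm x)^2"
    by (simp add: norm_vec_power2[of A] power_mult_distrib sum_distrib_right)
  finally show ?thesis by (rule power2_le_imp_le) simp
qed

lemma matrix_mult_norm_le: "norm ((A :: real^'n^'m) ** (B :: real^'p^'n)) \<le> norm A * norm B"
proof -
  have columns: "(norm M)^2 = (\<Sum>k\<in>UNIV. (norm (column k M))^2)" for M :: "real^'p^'q"
    by (simp add: norm_vec_power2 column_def) (rule sum.swap)
  have "(norm (A ** B))^2 = (\<Sum>k\<in>UNIV. (norm (A *v column k B))^2)"
    by (simp add: columns matrix_vector_mult_def matrix_matrix_mult_def column_def)
  also have "\<dots> \<le> (\<Sum>k\<in>UNIV. (norm A)^2 * (norm (column k B))^2)"
    by (intro sum_mono) (metis matrix_vector_mult_norm_le norm_ge_zero power_mono power_mult_distrib)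
  also have "\<dots> = (norm A * norm B)^2"
    by (simp add: columns[of B] power_mult_distrib sum_distrib_left)
  finally show ?thesis by (rule power2_le_imp_le) simp
qed

lemma norm_transpose: "norm (transpose (A :: real^'n^'m)) = norm A"
proof -
  have "(norm (transpose A))^2 = (norm A)^2"
    by (simp add: norm_vec_power2 transpose_def) (rule sum.swap)
  then show ?thesis by (simp add: power2_eq_iff_nonneg)
qed

lemma symmetric_matrix_inner:
  fixes M :: "real^'n^'n"
  assumes "transpose M = M"
  shows "(M *v u) \<bullet> w = u \<bullet> (M *v w)"
  by (metis assms dot_lmul_matrix transpose_matrix_vector)

lemma matrix_mult_add_rdistrib: "((A :: real^'n^'m) + B) ** C = A ** C + B ** C"
  by (simp add: matrix_matrix_mult_def vec_eq_iff distrib_right sum.distrib)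

lemma invertible_matrix_inv_right:
  fixes A :: "'a::field^'n^'n"
  assumes "invertible A"
  shows "A ** matrix_inv A = mat 1"
  using someI_ex[OF assms[unfolded invertible_def]] by (simp add: matrix_inv_def)

lemma pos_def_mat_nonneg:
  assumes "pos_def_mat R" shows "0 \<le> x \<bullet> (R *v x)"
proof (cases "x = 0")
  case False
  then show ?thesis using assms unfolding pos_def_mat_def by (simp add: less_imp_le)
qed simp

lemma pos_def_mat_invertible:
  assumes "pos_def_mat R" shows "invertible R"
proof -
  have "inj ((*v) R)"
  proof (rule injI)
    fix x y assume "R *v x = R *v y"
    then have "(x - y) \<bullet> (R *v (x - y)) = 0" by (simp add: matrix_vector_mult_diff_distrib)
    then show "x = y" using assms unfolding pos_def_mat_def by (auto dest: spec[of _ "x - y"])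
  qed
  then show ?thesis by (simp add: invertible_left_inverse matrix_left_invertible_injective)
qed

lemma matrix_vector_mult_axis_component: "((M :: real^'n^'m) *v axis i 1) $ k = M $ k $ i"
  by (simp add: matrix_vector_mult_def axis_def if_distrib cong: if_cong)

lemma trace_eq_sum_axis: "trace (M :: real^'n^'n) = (\<Sum>i\<in>UNIV. axis i 1 \<bullet> (M *v axis i 1))"
  by (simp add: trace_def inner_axis' matrix_vector_mult_axis_component)

lemma pos_def_mat_sqrt_unique:
  fixes R S :: "real^'n^'n"
  assumes R: "pos_def_mat R" and S: "pos_def_mat S" and eq: "R ** R = S ** S"
  shows "R = S"
proof -
  define D where "D = R - S"
  have D_sym: "transpose D = D" using R S by (simp add: D_def pos_def_mat_def transpose_def vec_eq_iff)
  have "R ** D + D ** S = R ** R - S ** S"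
    unfolding D_def
    by (simp add: matrix_matrix_mult_def vec_eq_iff sum_subtractf right_diff_distrib left_diff_distrib
        sum.distrib[symmetric])
  then have "D ** R ** D + D ** D ** S = 0"
    using eq by (simp add: matrix_mul_assoc[symmetric] matrix_add_ldistrib[symmetric])
  \<comment> \<open>Both traces below are sums of the nonnegative quadratic forms of \<open>R\<close>, \<open>S\<close> at the columns of \<open>D\<close>.\<close>
  then have "trace (D ** R ** D) + trace (D ** S ** D) = 0"
    by (metis trace_add trace_0 mat_0 trace_mul_sym matrix_mul_assoc)
  moreover have quad: "trace (D ** P ** D) = (\<Sum>i\<in>UNIV. (D *v axis i 1) \<bullet> (P *v (D *v axis i 1)))" for P
    unfolding trace_eq_sum_axis
    by (simp add: matrix_vector_mul_assoc[symmetric] symmetric_matrix_inner[OF D_sym])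
  ultimately have "(\<Sum>i\<in>UNIV. (D *v axis i 1) \<bullet> (R *v (D *v axis i 1))) = 0"
    using sum_nonneg[of UNIV "\<lambda>i. (D *v axis i 1) \<bullet> (R *v (D *v axis i 1))"]
      sum_nonneg[of UNIV "\<lambda>i. (D *v axis i 1) \<bullet> (S *v (D *v axis i 1))"]
      pos_def_mat_nonneg[OF R] pos_def_mat_nonneg[OF S] by (simp add: quad)
  then have "(D *v axis i 1) \<bullet> (R *v (D *v axis i 1)) = 0" for i
    using sum_nonneg_eq_0_iff[of UNIV "\<lambda>i. (D *v axis i 1) \<bullet> (R *v (D *v axis i 1))"]
      pos_def_mat_nonneg[OF R] by simp
  then have "D *v axis i 1 = 0" for i
    using R unfolding pos_def_mat_def by force
  then have "D = 0"
    by (simp add: vec_eq_iff flip: matrix_vector_mult_axis_component)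
  then show ?thesis by (simp add: D_def)
qed

lemma pd_sqrt_eqI:
  assumes "pos_def_mat R" "R ** R = A"
  shows "pd_sqrt A = R"
  unfolding pd_sqrt_def using assms pos_def_mat_sqrt_unique by blast

lemma pos_def_mat_id_plus:
  fixes X :: "real^'n^'n"
  assumes "transpose X = X" "norm X < 1"
  shows "pos_def_mat (mat 1 + X)"
  unfolding pos_def_mat_def
proof safe
  show "transpose (mat 1 + X) = mat 1 + X"
    using assms(1) by (simp add: transpose_def vec_eq_iff mat_def)
  fix x :: "real^'n" assume "x \<noteq> 0"
  have "\<bar>x \<bullet> (X *v x)\<bar> \<le> norm x * (norm X * norm x)"
    using Cauchy_Schwarz_ineq2[of x "X *v x"] matrix_vector_mult_norm_le[of X x]
    by (meson mult_left_mono norm_ge_zero order_trans)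
  also have "\<dots> < norm x * norm x"
    using \<open>x \<noteq> 0\<close> assms(2) by simp
  finally show "0 < x \<bullet> ((mat 1 + X) *v x)"
    by (simp add: matrix_vector_mult_add_rdistrib inner_add_right dot_square_norm power2_eq_square)
qed

lemma half_square_map_bounds:
  fixes E X Y :: "real^'n^'n"
  assumes "norm E \<le> 1/8" "norm X \<le> 1/4" "norm Y \<le> 1/4"
  shows "norm ((1/2) *\<^sub>R (E - X ** X)) \<le> 1/4"
    and "dist ((1/2) *\<^sub>R (E - X ** X)) ((1/2) *\<^sub>R (E - Y ** Y)) \<le> 1/4 * dist X Y"
proof -
  have "norm X * norm X \<le> 1/4 * (1/4)" using assms(2) by (intro mult_mono) auto
  then have "norm (X ** X) \<le> 1/16" using matrix_mult_norm_le[of X X] by simp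
  then show "norm ((1/2) *\<^sub>R (E - X ** X)) \<le> 1/4"
    using assms(1) norm_triangle_ineq4[of E "X ** X"] by simp
  have "X ** X - Y ** Y = X ** (X - Y) + (X - Y) ** Y"
    by (simp add: matrix_matrix_mult_def vec_eq_iff sum_subtractf right_diff_distrib left_diff_distrib
        sum.distrib[symmetric])
  then have "dist ((1/2) *\<^sub>R (E - X ** X)) ((1/2) *\<^sub>R (E - Y ** Y)) = 1/2 * norm (X ** (X - Y) + (X - Y) ** Y)"
    by (simp add: dist_norm algebra_simps flip: scaleR_diff_right norm_minus_commute)
  also have "\<dots> \<le> 1/2 * (norm X * norm (X - Y) + norm (X - Y) * norm Y)"
    using norm_triangle_ineq[of "X ** (X - Y)" "(X - Y) ** Y"]
      matrix_mult_norm_le[of X "X - Y"] matrix_mult_norm_le[of "X - Y" Y] by simp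
  also have "\<dots> \<le> 1/2 * (1/4 * norm (X - Y) + norm (X - Y) * (1/4))"
    using assms(2,3) by (intro mult_left_mono add_mono mult_right_mono) auto
  finally show "dist ((1/2) *\<^sub>R (E - X ** X)) ((1/2) *\<^sub>R (E - Y ** Y)) \<le> 1/4 * dist X Y"
    by (simp add: dist_norm)
qed

text \<open>\<open>(I + X)\<^sup>2 = I + E\<close> means that \<open>X\<close> is a fixed point of \<open>X \<mapsto> (E - X\<^sup>2) / 2\<close>, a contraction of
  the ball of radius \<open>1/4\<close>; uniqueness of the fixed point makes it symmetric.\<close>
lemma symmetric_sqrt_id_plus:
  fixes E :: "real^'n^'n"
  assumes E_sym: "transpose E = E" and E_small: "norm E \<le> 1/8"
  obtains X where "transpose X = X" "norm X \<le> 2 * norm E" "(mat 1 + X) ** (mat 1 + X) = mat 1 + E"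
proof -
  define f where "f X = (1/2) *\<^sub>R (E - X ** X)" for X :: "real^'n^'n"
  define S where "S = cball (0::real^'n^'n) (1/4)"
  have maps_to: "f ` S \<subseteq> S"
    using half_square_map_bounds(1)[OF E_small] by (auto simp: f_def S_def)
  have contraction: "dist (f X) (f Y) \<le> 1/4 * dist X Y" if "X \<in> S" "Y \<in> S" for X Y
    using half_square_map_bounds(2)[OF E_small] that by (simp add: f_def S_def)
  have "\<exists>!X. X \<in> S \<and> f X = X"
    by (rule Banach_fix[OF _ _ _ _ maps_to contraction]) (auto simp: S_def complete_eq_closed)
  then obtain X where X: "X \<in> S" "f X = X" and unique: "\<And>Y. Y \<in> S \<Longrightarrow> f Y = Y \<Longrightarrow> Y = X"
    by blast
  have "2 *\<^sub>R X = 2 *\<^sub>R f X" using X(2) by simp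
  also have "\<dots> = E - X ** X" by (simp add: f_def)
  finally have X_eq: "2 *\<^sub>R X = E - X ** X" .
  show ?thesis
  proof
    have transpose_diff: "transpose (A - B) = transpose A - transpose B" for A B :: "real^'n^'n"
      by (simp add: transpose_def vec_eq_iff)
    show "transpose X = X"
    proof (rule unique)
      show "transpose X \<in> S" using X(1) by (simp add: S_def norm_transpose)
      show "f (transpose X) = transpose X"
        using arg_cong[OF X(2), of transpose] E_sym
        by (simp add: f_def transpose_scalar transpose_diff matrix_transpose_mul)
    qed
    have "2 * norm X = norm (E - X ** X)" using arg_cong[OF X_eq, of norm] by simp
    also have "\<dots> \<le> norm E + norm X * norm X"
      using norm_triangle_ineq4[of E "X ** X"] matrix_mult_norm_le[of X X] by simp
    also have "\<dots> \<le> norm E + norm X * (1/4)"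
      using X(1) by (intro add_left_mono mult_left_mono) (auto simp: S_def)
    finally show "norm X \<le> 2 * norm E" using norm_ge_zero[of E] by linarith
    show "(mat 1 + X) ** (mat 1 + X) = mat 1 + E"
      using X_eq by (simp add: matrix_add_ldistrib matrix_mult_add_rdistrib scaleR_2 algebra_simps)
  qed
qed

lemma pd_sqrt_near_scaled_id:
  fixes A :: "real^'n^'n"
  assumes A_sym: "transpose A = A" and "0 < t" and close: "norm ((1/t) *\<^sub>R A - mat 1) \<le> 1/8"
  obtains X where "transpose X = X" "norm X \<le> 2 * norm ((1/t) *\<^sub>R A - mat 1)"
    "pd_sqrt A = sqrt t *\<^sub>R (mat 1 + X)" "pos_def_mat (pd_sqrt A)"
proof -
  define E where "E = (1/t) *\<^sub>R A - mat 1"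
  have "transpose E = E"
    using A_sym by (simp add: E_def transpose_def vec_eq_iff mat_def)
  then obtain X where X: "transpose X = X" "norm X \<le> 2 * norm E" "(mat 1 + X) ** (mat 1 + X) = mat 1 + E"
    using symmetric_sqrt_id_plus close unfolding E_def by blast
  define R where "R = sqrt t *\<^sub>R (mat 1 + X)"
  have "pos_def_mat (mat 1 + X)"
    using X(1,2) close by (intro pos_def_mat_id_plus) (auto simp: E_def)
  then have R_pd: "pos_def_mat R"
    using \<open>0 < t\<close> unfolding R_def pos_def_mat_def
    by (auto simp: transpose_scalar scaleR_matrix_vector_assoc[symmetric])
  have "R ** R = (sqrt t * sqrt t) *\<^sub>R ((mat 1 + X) ** (mat 1 + X))"
    unfolding R_def by (simp add: scalar_matrix_assoc[symmetric] matrix_scalar_ac)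
  also have "\<dots> = A"
    using \<open>0 < t\<close> X(3) by (simp add: E_def algebra_simps)
  finally have "pd_sqrt A = R" by (intro pd_sqrt_eqI R_pd)
  with X R_pd show ?thesis using that unfolding R_def E_def by auto
qed

lemma id_plus_mult_norm_bounds:
  fixes X :: "real^'n^'n"
  assumes "norm X \<le> \<delta>"
  shows "(1 - \<delta>) * norm u \<le> norm ((mat 1 + X) *v u)" "norm ((mat 1 + X) *v u) \<le> (1 + \<delta>) * norm u"
proof -
  have "norm (X *v u) \<le> \<delta> * norm u"
    using matrix_vector_mult_norm_le[of X u] assms by (meson mult_right_mono norm_ge_zero order_trans)
  moreover have "(mat 1 + X) *v u = u + X *v u" by (simp add: matrix_vector_mult_add_rdistrib)
  ultimately show "(1 - \<delta>) * norm u \<le> norm ((mat 1 + X) *v u)" "norm ((mat 1 + X) *v u) \<le> (1 + \<delta>) * norm u"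
    using norm_triangle_ineq[of u "X *v u"] norm_triangle_ineq2[of u "- (X *v u)"]
    by (auto simp: algebra_simps)
qed

lemma id_plus_preimage_bounds:
  fixes X :: "real^'n^'n"
  assumes X_sym: "transpose X = X" and X_small: "norm X \<le> \<delta>" and "\<delta> < 1"
    and image: "(\<lambda>k. (mat 1 + X) *v k) ` K = L"
    and upper: "\<And>l. l \<in> L \<Longrightarrow> norm l \<le> s"
    and lower: "\<And>a. \<exists>l\<in>L. r * norm a \<le> a \<bullet> l" and "0 \<le> r"
  shows "k \<in> K \<Longrightarrow> norm k \<le> s / (1 - \<delta>)"
    and "\<exists>k\<in>K. r / (1 + \<delta>) * norm a \<le> a \<bullet> k"
proof -
  define R where "R = mat 1 + X"
  have "0 \<le> \<delta>" using X_small norm_ge_zero[of X] by linarith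
  show "norm k \<le> s / (1 - \<delta>)" if "k \<in> K"
  proof -
    have "(1 - \<delta>) * norm k \<le> norm (R *v k)"
      unfolding R_def by (rule id_plus_mult_norm_bounds(1)[OF X_small])
    also have "\<dots> \<le> s" using that image upper by (auto simp: R_def)
    finally show ?thesis using \<open>\<delta> < 1\<close> by (simp add: pos_le_divide_eq mult.commute)
  qed
  have "invertible R"
    unfolding R_def using X_sym X_small \<open>\<delta> < 1\<close> by (intro pos_def_mat_invertible pos_def_mat_id_plus) auto
  define w where "w = matrix_inv R *v a"
  have Rw: "R *v w = a"
    by (simp add: w_def matrix_vector_mul_assoc invertible_matrix_inv_right[OF \<open>invertible R\<close>])
  obtain k where "k \<in> K" and k: "r * norm w \<le> w \<bullet> (R *v k)"
    using lower[of w] image unfolding R_def by blast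
  have "norm a \<le> (1 + \<delta>) * norm w"
    unfolding Rw[symmetric] R_def by (rule id_plus_mult_norm_bounds(2)[OF X_small])
  then have "r / (1 + \<delta>) * norm a \<le> r / (1 + \<delta>) * ((1 + \<delta>) * norm w)"
    using \<open>0 \<le> r\<close> \<open>0 \<le> \<delta>\<close> by (intro mult_left_mono) simp_all
  also have "\<dots> = r * norm w" using \<open>0 \<le> \<delta>\<close> by simp
  also have "\<dots> \<le> w \<bullet> (R *v k)" by (rule k)
  also have "\<dots> = a \<bullet> k"
    using X_sym unfolding Rw[symmetric] R_def
    by (intro symmetric_matrix_inner[symmetric]) (simp add: transpose_def vec_eq_iff mat_def)
  finally show "\<exists>k\<in>K. r / (1 + \<delta>) * norm a \<le> a \<bullet> k" using \<open>k \<in> K\<close> by blast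
qed

section \<open>Hausdorff distance to a ball\<close>

lemma mem_ball_thickenI:
  fixes b k :: "'a::real_normed_vector"
  assumes "b \<in> B" "norm (k - b) \<le> r"
  shows "k \<in> ball_thicken B r"
  unfolding ball_thicken_def using assms by (intro CollectI exI[of _ b] exI[of _ "k - b"]) auto

lemma mem_ball_thicken_cball:
  fixes k :: "'a::real_normed_vector"
  assumes "norm k \<le> c + \<eta>" "0 \<le> c" "0 \<le> \<eta>"
  shows "k \<in> ball_thicken (cball 0 c) \<eta>"
proof (cases "norm k \<le> c")
  case True
  then show ?thesis using assms by (intro mem_ball_thickenI[of k]) auto
next
  case False
  then have "0 < norm k" using assms by linarith
  have "k - (c / norm k) *\<^sub>R k = (1 - c / norm k) *\<^sub>R k" by (simp add: scaleR_diff_left)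
  moreover have "c / norm k \<le> 1" using False \<open>0 < norm k\<close> by simp
  ultimately have "norm (k - (c / norm k) *\<^sub>R k) = (1 - c / norm k) * norm k"
    by simp
  also have "\<dots> = norm k - c" using \<open>0 < norm k\<close> by (simp add: field_simps)
  finally have "norm (k - (c / norm k) *\<^sub>R k) = norm k - c" .
  then show ?thesis
    using assms \<open>0 < norm k\<close> by (intro mem_ball_thickenI[of "(c / norm k) *\<^sub>R k"]) auto
qed

lemma hausdorff_dist_le:
  fixes K B :: "'a::real_normed_vector set"
  assumes "K \<subseteq> ball_thicken B \<eta>" "B \<subseteq> ball_thicken K \<eta>" "0 \<le> \<eta>"
  shows "0 \<le> hausdorff_dist K B" "hausdorff_dist K B \<le> \<eta>"
proof -
  let ?S1 = "{r. r \<ge> 0 \<and> K \<subseteq> ball_thicken B r}" and ?S2 = "{r. r \<ge> 0 \<and> B \<subseteq> ball_thicken K r}"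
  have "\<eta> \<in> ?S1" "\<eta> \<in> ?S2" using assms by auto
  moreover have "bdd_below ?S1" "bdd_below ?S2" by (auto intro!: bdd_belowI[of _ 0])
  ultimately have "Inf ?S1 \<le> \<eta>" "Inf ?S2 \<le> \<eta>" "0 \<le> Inf ?S1" "0 \<le> Inf ?S2"
    by (auto intro: cInf_lower cInf_greatest)
  then show "0 \<le> hausdorff_dist K B" "hausdorff_dist K B \<le> \<eta>"
    unfolding hausdorff_dist_def by auto
qed

lemma cball_subset_closure_if_support_ge:
  fixes K :: "'a::euclidean_space set"
  assumes "convex K" and support: "\<And>a. \<exists>k\<in>K. r * norm a \<le> a \<bullet> k"
  shows "cball 0 r \<subseteq> closure K"
proof
  fix p :: 'a assume p: "p \<in> cball 0 r"
  show "p \<in> closure K"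
  proof (rule ccontr)
    assume "p \<notin> closure K"
    then obtain a b where ab: "a \<bullet> p < b" "\<forall>z\<in>closure K. b < a \<bullet> z"
      using separating_hyperplane_closed_point[OF convex_closure[OF \<open>convex K\<close>] closed_closure] by blast
    obtain k where "k \<in> K" "r * norm (- a) \<le> - a \<bullet> k" using support by blast
    moreover have "- a \<bullet> p \<le> norm a * r"
      using norm_cauchy_schwarz[of "- a" p] mult_left_mono[of "norm p" r "norm a"] p by simp
    moreover have "b < a \<bullet> k" using ab(2) \<open>k \<in> K\<close> closure_subset by blast
    ultimately show False using ab(1) by (simp add: mult.commute)
  qed
qed

text \<open>The lower bound on the support function only puts the ball of radius \<open>r\<close> into the closure
  of \<open>K\<close>; the strict inequality absorbs this.\<close>
lemma hausdorff_dist_cball_le: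
  fixes K :: "'a::euclidean_space set"
  assumes "convex K"
    and upper: "\<And>k. k \<in> K \<Longrightarrow> norm k \<le> s" and lower: "\<And>a. \<exists>k\<in>K. r * norm a \<le> a \<bullet> k"
    and "0 < c" "0 \<le> r" "r \<le> c" "s \<le> c + \<eta>" "c - r < \<eta>"
  shows "0 \<le> hausdorff_dist K (cball 0 c)" "hausdorff_dist K (cball 0 c) \<le> \<eta>"
proof -
  have "0 \<le> \<eta>" using \<open>r \<le> c\<close> \<open>c - r < \<eta>\<close> by linarith
  have "K \<subseteq> ball_thicken (cball 0 c) \<eta>"
    using upper assms(4-8) by (intro subsetI mem_ball_thicken_cball) force+
  moreover have "cball 0 c \<subseteq> ball_thicken K \<eta>"
  proof
    fix p :: 'a assume p: "p \<in> cball 0 c"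
    define p' where "p' = (r / c) *\<^sub>R p"
    have "p - p' = (1 - r / c) *\<^sub>R p" by (simp add: p'_def scaleR_diff_left)
    then have "norm (p - p') = (1 - r / c) * norm p"
      using \<open>0 < c\<close> \<open>r \<le> c\<close> by simp
    also have "\<dots> \<le> (1 - r / c) * c"
      using p \<open>0 < c\<close> \<open>r \<le> c\<close> by (intro mult_left_mono) auto
    also have "\<dots> = c - r" using \<open>0 < c\<close> by (simp add: field_simps)
    finally have "norm (p - p') \<le> c - r" .
    have "norm p' = r / c * norm p" using \<open>0 < c\<close> \<open>0 \<le> r\<close> by (simp add: p'_def)
    also have "\<dots> \<le> r / c * c" using p \<open>0 < c\<close> \<open>0 \<le> r\<close> by (intro mult_left_mono) auto
    also have "\<dots> = r" using \<open>0 < c\<close> by simp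
    finally have "p' \<in> closure K"
      using subsetD[OF cball_subset_closure_if_support_ge[OF \<open>convex K\<close> lower]] by simp
    moreover have "0 < \<eta> - (c - r)" using \<open>c - r < \<eta>\<close> by simp
    ultimately obtain k where "k \<in> K" "dist k p' < \<eta> - (c - r)"
      unfolding closure_approachable by blast
    with \<open>norm (p - p') \<le> c - r\<close> show "p \<in> ball_thicken K \<eta>"
      using norm_triangle_ineq[of "p - p'" "p' - k"]
      by (intro mem_ball_thickenI[of k]) (auto simp: dist_norm norm_minus_commute)
  qed
  ultimately show "0 \<le> hausdorff_dist K (cball 0 c)" "hausdorff_dist K (cball 0 c) \<le> \<eta>"
    using hausdorff_dist_le \<open>0 \<le> \<eta>\<close> by blast+
qed

section \<open>The rescaled image of the cube\<close>

text \<open>\<open>mean_abs_proj a n\<close> is \<open>\<theta> \<mapsto> \<parallel>G\<^sup>T\<theta>\<parallel>\<^sub>1 / n\<close> for the \<open>d \<times> n\<close> matrix \<open>G = (a i j)\<close>,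
  i.e. the support function of \<open>G([-1,1]\<^sup>n) / n\<close>.\<close>
definition mean_abs_proj :: "('d::finite \<Rightarrow> nat \<Rightarrow> real) \<Rightarrow> nat \<Rightarrow> real^'d \<Rightarrow> real" where
  "mean_abs_proj a n \<theta> = (\<Sum>j<n. \<bar>\<Sum>i\<in>UNIV. \<theta>$i * a i j\<bar>) / real n"

definition mean_sq_proj :: "('d::finite \<Rightarrow> nat \<Rightarrow> real) \<Rightarrow> nat \<Rightarrow> real^'d \<Rightarrow> real" where
  "mean_sq_proj a n \<theta> = (\<Sum>j<n. (\<Sum>i\<in>UNIV. \<theta>$i * a i j)^2) / real n"

lemma (in prob_space) AE_mean_proj_tendsto:
  fixes g :: "'d::finite \<Rightarrow> nat \<Rightarrow> 'a \<Rightarrow> real"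
  assumes indep: "indep_vars (\<lambda>_. borel) (\<lambda>(i, j). g i j) UNIV"
    and std: "\<And>i j. distributed M lborel (g i j) std_normal_density"
  shows "AE \<omega> in M. (\<lambda>n. mean_abs_proj (\<lambda>i j. g i j \<omega>) n \<theta>) \<longlonglongrightarrow> sqrt (2 / pi) * norm \<theta>"
    and "AE \<omega> in M. (\<lambda>n. mean_sq_proj (\<lambda>i j. g i j \<omega>) n \<theta>) \<longlonglongrightarrow> (norm \<theta>)^2"
proof -
  define X where "X j \<omega> = (\<Sum>i\<in>UNIV. \<theta>$i * g i j \<omega>)" for j \<omega>
  have "(AE \<omega> in M. (\<lambda>n. (\<Sum>j<n. \<bar>X j \<omega>\<bar>) / real n) \<longlonglongrightarrow> sqrt (2 / pi) * norm \<theta>) \<and>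
        (AE \<omega> in M. (\<lambda>n. (\<Sum>j<n. (X j \<omega>)^2) / real n) \<longlonglongrightarrow> (norm \<theta>)^2)"
  proof (cases "\<theta> = 0")
    case True
    then show ?thesis by (simp add: X_def)
  next
    case False
    have "distributed M lborel (X j) (normal_density 0 (norm \<theta>))" for j
      unfolding X_def using indep_vars_row[OF indep, of j]
      by (intro distributed_std_normal_combination[OF _ std False]) simp
    note moments = centered_normal_moments[OF this, simplified, OF False]
    have "indep_vars (\<lambda>_. borel) (\<lambda>j \<omega>. F (\<lambda>i. g i j \<omega>)) UNIV"
      if "F \<in> borel_measurable (PiM UNIV (\<lambda>_. borel))" for F
      using indep_vars_columns[OF indep that] by simp
    then have indep_abs: "indep_vars (\<lambda>_. borel) (\<lambda>j \<omega>. \<bar>X j \<omega>\<bar>) UNIV"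
      and indep_sq: "indep_vars (\<lambda>_. borel) (\<lambda>j \<omega>. (X j \<omega>)^2) UNIV"
      unfolding X_def by measurable
    have "AE \<omega> in M. (\<lambda>n. (\<Sum>j<n. \<bar>X j \<omega>\<bar>) / real n) \<longlonglongrightarrow> norm \<theta> * sqrt (2 / pi)"
      by (rule strong_law_nonneg[OF indep_abs]) (use moments in auto)
    moreover have "AE \<omega> in M. (\<lambda>n. (\<Sum>j<n. (X j \<omega>)^2) / real n) \<longlonglongrightarrow> (norm \<theta>)^2"
      by (rule strong_law_nonneg[OF indep_sq, where C = "3 * (norm \<theta>)^4"])
        (use moments in \<open>simp_all flip: power_mult\<close>)
    ultimately show ?thesis by (simp add: mult.commute)
  qed
  then show "AE \<omega> in M. (\<lambda>n. mean_abs_proj (\<lambda>i j. g i j \<omega>) n \<theta>) \<longlonglongrightarrow> sqrt (2 / pi) * norm \<theta>"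
    and "AE \<omega> in M. (\<lambda>n. mean_sq_proj (\<lambda>i j. g i j \<omega>) n \<theta>) \<longlonglongrightarrow> (norm \<theta>)^2"
    by (simp_all add: mean_abs_proj_def mean_sq_proj_def X_def)
qed

lemma mean_abs_proj_add_le:
  "mean_abs_proj a n (\<theta> + \<phi>) \<le> mean_abs_proj a n \<theta> + mean_abs_proj a n \<phi>"
proof -
  have "(\<Sum>j<n. \<bar>\<Sum>i\<in>UNIV. (\<theta> + \<phi>)$i * a i j\<bar>) \<le>
      (\<Sum>j<n. \<bar>\<Sum>i\<in>UNIV. \<theta>$i * a i j\<bar> + \<bar>\<Sum>i\<in>UNIV. \<phi>$i * a i j\<bar>)"
    by (intro sum_mono) (simp add: distrib_right sum.distrib abs_triangle_ineq)
  then show ?thesis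
    by (simp add: mean_abs_proj_def sum.distrib divide_right_mono flip: add_divide_distrib)
qed

lemma mean_abs_proj_scaleR: "mean_abs_proj a n (r *\<^sub>R \<theta>) = \<bar>r\<bar> * mean_abs_proj a n \<theta>"
  by (simp add: mean_abs_proj_def mult.assoc abs_mult sum_distrib_left[symmetric])

lemma eventually_mean_abs_proj_close_to_norm:
  assumes "\<And>\<theta>. \<theta> \<in> D \<Longrightarrow> (\<lambda>n. mean_abs_proj a n \<theta>) \<longlonglongrightarrow> c * norm \<theta>"
    and "closure D = UNIV" "Basis \<subseteq> D" "0 \<le> c" "0 < \<epsilon>"
  shows "eventually (\<lambda>n. \<forall>\<theta>. \<bar>mean_abs_proj a n \<theta> - c * norm \<theta>\<bar> \<le> \<epsilon> * norm \<theta>) sequentially"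
  by (rule eventually_seminorms_close_to_norm[where p = "mean_abs_proj a"])
    (use assms mean_abs_proj_add_le mean_abs_proj_scaleR in auto)

lemma inner_G_map: "\<theta> \<bullet> G_map g n \<omega> x = (\<Sum>j<n. x j * (\<Sum>i\<in>UNIV. \<theta>$i * g i j \<omega>))"
  unfolding G_map_def inner_vec_def
  by (simp add: sum_distrib_left sum_distrib_right mult_ac) (rule sum.swap)

lemma inner_scaled_G_map_cube_le:
  assumes "x \<in> cube n"
  shows "\<theta> \<bullet> ((1 / real n) *\<^sub>R G_map g n \<omega> x) \<le> mean_abs_proj (\<lambda>i j. g i j \<omega>) n \<theta>"
proof -
  have "\<theta> \<bullet> G_map g n \<omega> x \<le> (\<Sum>j<n. \<bar>\<Sum>i\<in>UNIV. \<theta>$i * g i j \<omega>\<bar>)"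
    unfolding inner_G_map
  proof (intro sum_mono)
    fix j assume "j \<in> {..<n}"
    then have "\<bar>x j\<bar> \<le> 1" using assms by (simp add: cube_def)
    have "x j * (\<Sum>i\<in>UNIV. \<theta>$i * g i j \<omega>) \<le> \<bar>x j\<bar> * \<bar>\<Sum>i\<in>UNIV. \<theta>$i * g i j \<omega>\<bar>"
      unfolding abs_mult[symmetric] by (rule abs_ge_self)
    also have "\<dots> \<le> \<bar>\<Sum>i\<in>UNIV. \<theta>$i * g i j \<omega>\<bar>"
      using \<open>\<bar>x j\<bar> \<le> 1\<close> by (simp add: mult_left_le_one_le)
    finally show "x j * (\<Sum>i\<in>UNIV. \<theta>$i * g i j \<omega>) \<le> \<bar>\<Sum>i\<in>UNIV. \<theta>$i * g i j \<omega>\<bar>" .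
  qed
  then show ?thesis by (simp add: mean_abs_proj_def divide_right_mono)
qed

lemma exists_cube_inner_scaled_G_map_eq:
  "\<exists>x\<in>cube n. \<theta> \<bullet> ((1 / real n) *\<^sub>R G_map g n \<omega> x) = mean_abs_proj (\<lambda>i j. g i j \<omega>) n \<theta>"
proof
  define x where "x j = (if j < n then sgn (\<Sum>i\<in>UNIV. \<theta>$i * g i j \<omega>) else 0)" for j
  show "x \<in> cube n" by (simp add: cube_def x_def abs_sgn_eq)
  have "sgn t * t = \<bar>t\<bar>" for t :: real by (simp add: sgn_if)
  then show "\<theta> \<bullet> ((1 / real n) *\<^sub>R G_map g n \<omega> x) = mean_abs_proj (\<lambda>i j. g i j \<omega>) n \<theta>"
    by (simp add: inner_G_map mean_abs_proj_def x_def)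
qed

lemma norm_scaled_G_map_cube_le:
  assumes "x \<in> cube n" and bound: "\<And>\<theta>. mean_abs_proj (\<lambda>i j. g i j \<omega>) n \<theta> \<le> s * norm \<theta>" and "0 \<le> s"
  shows "norm ((1 / real n) *\<^sub>R G_map g n \<omega> x) \<le> s"
proof -
  define y where "y = (1 / real n) *\<^sub>R G_map g n \<omega> x"
  have "norm y * norm y = y \<bullet> y" by (simp add: dot_square_norm power2_eq_square)
  also have "\<dots> \<le> mean_abs_proj (\<lambda>i j. g i j \<omega>) n y"
    using inner_scaled_G_map_cube_le[OF \<open>x \<in> cube n\<close>, where \<theta> = y and g = g and \<omega> = \<omega>]
    unfolding y_def[symmetric] .
  also have "\<dots> \<le> s * norm y" by (rule bound)
  finally show ?thesis using \<open>0 \<le> s\<close> by (cases "y = 0") (auto simp: y_def[symmetric])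
qed

lemma convex_scaled_I_star_cube: "convex ((\<lambda>x. (1 / sqrt (real n)) *\<^sub>R I_star g n \<omega> x) ` cube n)"
proof -
  have "convex (G_map g n \<omega> ` cube n)"
  proof (rule convexI, clarify)
    fix x y :: "nat \<Rightarrow> real" and u v :: real
    assume xy: "x \<in> cube n" "y \<in> cube n" and uv: "0 \<le> u" "0 \<le> v" "u + v = 1"
    define z where "z j = u * x j + v * y j" for j
    have "\<bar>z j\<bar> \<le> u * \<bar>x j\<bar> + v * \<bar>y j\<bar>" for j
      unfolding z_def using uv abs_triangle_ineq[of "u * x j" "v * y j"] by (simp add: abs_mult)
    also have "\<dots> j \<le> u * 1 + v * 1" if "j < n" for j
      using xy that uv by (intro add_mono mult_left_mono) (auto simp: cube_def)
    finally have "z \<in> cube n" using xy uv by (auto simp: cube_def z_def)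
    moreover have "u *\<^sub>R G_map g n \<omega> x + v *\<^sub>R G_map g n \<omega> y = G_map g n \<omega> z"
      by (simp add: G_map_def z_def vec_eq_iff sum_distrib_left sum.distrib algebra_simps)
    ultimately show "u *\<^sub>R G_map g n \<omega> x + v *\<^sub>R G_map g n \<omega> y \<in> G_map g n \<omega> ` cube n"
      by (simp add: imageI)
  qed
  moreover have "(\<lambda>x. (1 / sqrt (real n)) *\<^sub>R I_star g n \<omega> x) ` cube n =
      (\<lambda>y. (1 / sqrt (real n)) *\<^sub>R (matrix_inv (pd_sqrt (GGt g n \<omega>)) *v y)) ` (G_map g n \<omega> ` cube n)"
    by (auto simp: I_star_def image_image)
  ultimately show ?thesis
    by (metis convex_linear_image linear_compose_scale_right matrix_vector_mul_linear)
qed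

lemma id_plus_mult_scaled_I_star:
  assumes "0 < n" and sqrt_eq: "pd_sqrt (GGt g n \<omega>) = sqrt (real n) *\<^sub>R (mat 1 + X)"
    and "pos_def_mat (pd_sqrt (GGt g n \<omega>))"
  shows "(mat 1 + X) *v ((1 / sqrt (real n)) *\<^sub>R I_star g n \<omega> x) = (1 / real n) *\<^sub>R G_map g n \<omega> x"
proof -
  let ?S = "pd_sqrt (GGt g n \<omega>)"
  have "?S *v I_star g n \<omega> x = G_map g n \<omega> x"
    using invertible_matrix_inv_right[OF pos_def_mat_invertible[OF assms(3)]]
    by (simp add: I_star_def matrix_vector_mul_assoc)
  then have "sqrt (real n) *\<^sub>R ((mat 1 + X) *v I_star g n \<omega> x) = G_map g n \<omega> x"
    by (simp add: sqrt_eq scaleR_matrix_vector_assoc)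
  then have "(1 / real n) *\<^sub>R G_map g n \<omega> x = (1 / real n) *\<^sub>R (sqrt (real n) *\<^sub>R ((mat 1 + X) *v I_star g n \<omega> x))"
    by simp
  also have "\<dots> = (sqrt (real n) / real n) *\<^sub>R ((mat 1 + X) *v I_star g n \<omega> x)"
    by simp
  also have "sqrt (real n) / real n = 1 / sqrt (real n)"
    using sqrt_divide_self_eq[of "real n"] by (simp add: divide_inverse)
  finally show ?thesis unfolding matrix_vector_mult_scaleR by (rule sym)
qed

lemma hausdorff_dist_scaled_I_star_cube_le:
  fixes g :: "'d::finite \<Rightarrow> nat \<Rightarrow> 'w \<Rightarrow> real" and X :: "real^'d^'d"
  assumes "0 < n"
    and sqrt_eq: "pd_sqrt (GGt g n \<omega>) = sqrt (real n) *\<^sub>R (mat 1 + X)"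
    and pd: "pos_def_mat (pd_sqrt (GGt g n \<omega>))"
    and X_sym: "transpose X = X" and X_small: "norm X \<le> \<delta>" and "\<delta> < 1"
    and close: "\<And>\<theta>. \<bar>mean_abs_proj (\<lambda>i j. g i j \<omega>) n \<theta> - c * norm \<theta>\<bar> \<le> \<epsilon> * norm \<theta>"
    and "0 < c" "0 \<le> \<epsilon>" "\<epsilon> \<le> c"
    and upper: "(c + \<epsilon>) / (1 - \<delta>) \<le> c + \<eta>" and lower: "c - (c - \<epsilon>) / (1 + \<delta>) < \<eta>"
  shows "0 \<le> hausdorff_dist ((\<lambda>x. (1 / sqrt (real n)) *\<^sub>R I_star g n \<omega> x) ` cube n) (cball 0 c)"
    and "hausdorff_dist ((\<lambda>x. (1 / sqrt (real n)) *\<^sub>R I_star g n \<omega> x) ` cube n) (cball 0 c) \<le> \<eta>"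
proof -
  let ?K = "(\<lambda>x. (1 / sqrt (real n)) *\<^sub>R I_star g n \<omega> x) ` cube n"
  let ?L = "(\<lambda>x. (1 / real n) *\<^sub>R G_map g n \<omega> x) ` cube n"
  have image: "(\<lambda>k. (mat 1 + X) *v k) ` ?K = ?L"
    by (auto simp: image_image id_plus_mult_scaled_I_star[OF \<open>0 < n\<close> sqrt_eq pd])
  have L_upper: "norm l \<le> c + \<epsilon>" if "l \<in> ?L" for l
    using that close \<open>0 < c\<close> \<open>0 \<le> \<epsilon>\<close>
    by (auto intro!: norm_scaled_G_map_cube_le simp: abs_le_iff algebra_simps)
  have L_lower: "\<exists>l\<in>?L. (c - \<epsilon>) * norm a \<le> a \<bullet> l" for a
  proof -
    obtain x where "x \<in> cube n" "a \<bullet> ((1 / real n) *\<^sub>R G_map g n \<omega> x) = mean_abs_proj (\<lambda>i j. g i j \<omega>) n a"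
      using exists_cube_inner_scaled_G_map_eq[of n a g \<omega>] by blast
    moreover have "(c - \<epsilon>) * norm a \<le> mean_abs_proj (\<lambda>i j. g i j \<omega>) n a"
      using close[of a] by (simp add: abs_le_iff algebra_simps)
    ultimately show ?thesis by (metis image_eqI)
  qed
  note preimage_bounds = id_plus_preimage_bounds[OF X_sym X_small \<open>\<delta> < 1\<close> image L_upper L_lower]
  have K_upper: "norm k \<le> (c + \<epsilon>) / (1 - \<delta>)" if "k \<in> ?K" for k
    using preimage_bounds(1) that \<open>\<epsilon> \<le> c\<close> by simp
  have K_lower: "\<exists>k\<in>?K. (c - \<epsilon>) / (1 + \<delta>) * norm a \<le> a \<bullet> k" for a
    using preimage_bounds(2) \<open>\<epsilon> \<le> c\<close> by simp
  have "0 \<le> \<delta>" using X_small norm_ge_zero[of X] by linarith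
  then have "0 \<le> (c - \<epsilon>) / (1 + \<delta>)" "(c - \<epsilon>) / (1 + \<delta>) \<le> c"
    using \<open>0 \<le> \<epsilon>\<close> \<open>\<epsilon> \<le> c\<close> \<open>0 < c\<close> mult_nonneg_nonneg[of c \<delta>]
    by (simp_all add: divide_le_eq algebra_simps)
  from hausdorff_dist_cball_le[OF convex_scaled_I_star_cube K_upper K_lower \<open>0 < c\<close> this upper lower]
  show "0 \<le> hausdorff_dist ?K (cball 0 c)" "hausdorff_dist ?K (cball 0 c) \<le> \<eta>" by auto
qed

lemma sum_axis_mult: "(\<Sum>l\<in>UNIV. axis i (1::real) $ l * f l) = f i"
proof -
  have "(\<Sum>l\<in>UNIV. axis i (1::real) $ l * f l) = (\<Sum>l\<in>UNIV. if l = i then f l else 0)"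
    by (rule sum.cong) (auto simp: axis_def)
  then show ?thesis by simp
qed

text \<open>Polarisation: the quadratic form of \<open>GG\<^sup>T/n\<close> at \<open>e\<^sub>i + e\<^sub>k\<close> determines its entries (for
  \<open>i = k\<close> the vector is \<open>2e\<^sub>i\<close>).\<close>
lemma scaled_GGt_tendsto_id:
  fixes g :: "'d::finite \<Rightarrow> nat \<Rightarrow> 'w \<Rightarrow> real"
  assumes "\<And>i k. (\<lambda>n. mean_sq_proj (\<lambda>i j. g i j \<omega>) n (axis i 1 + axis k 1)) \<longlonglongrightarrow> (norm (axis i 1 + axis k 1 :: real^'d))^2"
  shows "(\<lambda>n. (1 / real n) *\<^sub>R GGt g n \<omega>) \<longlonglongrightarrow> mat 1"
proof (intro vec_tendstoI)
  fix i k :: 'd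
  define Q where "Q i k n = (\<Sum>j<n. (g i j \<omega> + g k j \<omega>)^2) / real n" for i k n
  have Q_lim: "(\<lambda>n. Q i k n) \<longlonglongrightarrow> (if i = k then 4 else 2)" for i k
  proof -
    have "(\<Sum>l\<in>UNIV. (axis i 1 + axis k 1) $ l * g l j \<omega>) = g i j \<omega> + g k j \<omega>" for j
      by (simp add: distrib_right sum.distrib sum_axis_mult)
    moreover have "(norm (axis i 1 + axis k 1 :: real^'d))^2 = (if i = k then 4 else 2)"
      by (simp add: power2_norm_eq_inner inner_add_left inner_add_right inner_axis_axis)
    ultimately show ?thesis using assms[of i k] by (simp add: mean_sq_proj_def Q_def)
  qed
  have polar: "(\<Sum>j<n. g i j \<omega> * g k j \<omega>) / real n = (Q i k n - Q i i n / 4 - Q k k n / 4) / 2" for n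
  proof -
    have "(g i j \<omega> + g k j \<omega>)^2 = (g i j \<omega>)^2 + (g k j \<omega>)^2 + 2 * (g i j \<omega> * g k j \<omega>)"
      "(g i j \<omega> + g i j \<omega>)^2 = 4 * (g i j \<omega>)^2" "(g k j \<omega> + g k j \<omega>)^2 = 4 * (g k j \<omega>)^2" for j
      by (simp_all add: power2_eq_square algebra_simps)
    then show ?thesis
      by (simp add: Q_def sum.distrib sum_distrib_left[symmetric] add_divide_distrib diff_divide_distrib)
  qed
  have "(\<lambda>n. (Q i k n - Q i i n / 4 - Q k k n / 4) / 2)
      \<longlonglongrightarrow> ((if i = k then 4 else 2) - 4 / 4 - 4 / 4) / 2"
    using Q_lim[of i k] Q_lim[of i i] Q_lim[of k k] by (intro tendsto_intros) auto
  then have "(\<lambda>n. (Q i k n - Q i i n / 4 - Q k k n / 4) / 2) \<longlonglongrightarrow> (if i = k then 1 else 0)"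
    by (cases "i = k") simp_all
  then have "(\<lambda>n. (\<Sum>j<n. g i j \<omega> * g k j \<omega>) / real n) \<longlonglongrightarrow> (if i = k then 1 else 0)"
    by (simp only: polar)
  then show "(\<lambda>n. ((1 / real n) *\<^sub>R GGt g n \<omega>) $ i $ k) \<longlonglongrightarrow> mat 1 $ i $ k"
    by (simp add: GGt_def mat_def)
qed

lemma exists_small_parameter:
  fixes c \<eta> :: real
  assumes "0 < c" "0 < \<eta>"
  obtains \<tau> where "0 < \<tau>" "\<tau> < 1/2" "\<tau> < c" "(c + \<tau>) / (1 - \<tau>) < c + \<eta>" "c - (c - \<tau>) / (1 + \<tau>) < \<eta>"
proof -
  have "((\<lambda>\<tau>. (c + \<tau>) / (1 - \<tau>)) \<longlongrightarrow> c) (at_right 0)" by real_asymp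
  then have "eventually (\<lambda>\<tau>. (c + \<tau>) / (1 - \<tau>) < c + \<eta>) (at_right 0)"
    using assms(2) by (intro order_tendstoD(2)) auto
  moreover have "((\<lambda>\<tau>. c - (c - \<tau>) / (1 + \<tau>)) \<longlongrightarrow> 0) (at_right 0)" by real_asymp
  then have "eventually (\<lambda>\<tau>. c - (c - \<tau>) / (1 + \<tau>) < \<eta>) (at_right 0)"
    using assms(2) by (intro order_tendstoD(2))
  moreover have "eventually (\<lambda>\<tau>. \<tau> < min (1/2) c) (at_right (0::real))"
    using assms(1) by (intro order_tendstoD(2)[OF tendsto_ident_at]) auto
  moreover have "eventually (\<lambda>\<tau>. 0 < \<tau>) (at_right (0::real))" by (rule eventually_at_right_less)
  ultimately have "eventually (\<lambda>\<tau>. (c + \<tau>) / (1 - \<tau>) < c + \<eta> \<and> c - (c - \<tau>) / (1 + \<tau>) < \<eta>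
      \<and> \<tau> < min (1/2) c \<and> 0 < \<tau>) (at_right 0)"
    by (intro eventually_conj)
  then obtain \<tau> where "(c + \<tau>) / (1 - \<tau>) < c + \<eta>" "c - (c - \<tau>) / (1 + \<tau>) < \<eta>" "\<tau> < min (1/2) c" "0 < \<tau>"
    using eventually_happens'[OF trivial_limit_at_right_real] by blast
  then show ?thesis using that by simp
qed

lemma hausdorff_dist_scaled_I_star_cube_tendsto:
  fixes g :: "'d::finite \<Rightarrow> nat \<Rightarrow> 'w \<Rightarrow> real"
  assumes close: "\<And>\<epsilon>. 0 < \<epsilon> \<Longrightarrow> eventually (\<lambda>n. \<forall>\<theta>.
      \<bar>mean_abs_proj (\<lambda>i j. g i j \<omega>) n \<theta> - c * norm \<theta>\<bar> \<le> \<epsilon> * norm \<theta>) sequentially"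
    and Gram: "(\<lambda>n. (1 / real n) *\<^sub>R GGt g n \<omega>) \<longlonglongrightarrow> mat 1"
    and "0 < c"
  shows "(\<lambda>n. hausdorff_dist ((\<lambda>x. (1 / sqrt (real n)) *\<^sub>R I_star g n \<omega> x) ` cube n) (cball 0 c)) \<longlonglongrightarrow> 0"
proof (rule tendstoI)
  fix \<eta> :: real assume "0 < \<eta>"
  then obtain \<tau> where \<tau>: "0 < \<tau>" "\<tau> < 1/2" "\<tau> < c" "(c + \<tau>) / (1 - \<tau>) < c + \<eta> / 2"
      "c - (c - \<tau>) / (1 + \<tau>) < \<eta> / 2"
    using exists_small_parameter[OF \<open>0 < c\<close>, of "\<eta> / 2"] by auto
  have "0 < min (1/8) (\<tau>/2)" using \<tau>(1) by simp
  from order_tendstoD(2)[OF tendsto_norm_zero[OF LIM_zero[OF Gram]] this]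
  show "eventually (\<lambda>n. dist (hausdorff_dist ((\<lambda>x. (1 / sqrt (real n)) *\<^sub>R I_star g n \<omega> x) ` cube n)
      (cball 0 c)) 0 < \<eta>) sequentially"
    using close[OF \<tau>(1)] eventually_gt_at_top[of 0]
  proof eventually_elim
    case (elim n)
    have "transpose (GGt g n \<omega>) = GGt g n \<omega>"
      by (simp add: GGt_def transpose_def vec_eq_iff mult.commute)
    then obtain X where X: "transpose X = X" "norm X \<le> 2 * norm ((1 / real n) *\<^sub>R GGt g n \<omega> - mat 1)"
      "pd_sqrt (GGt g n \<omega>) = sqrt (real n) *\<^sub>R (mat 1 + X)" "pos_def_mat (pd_sqrt (GGt g n \<omega>))"
      using pd_sqrt_near_scaled_id[of "GGt g n \<omega>" "real n"] elim by force
    have "norm X \<le> \<tau>" using X(2) elim(1) by linarith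
    have "0 \<le> hausdorff_dist ((\<lambda>x. (1 / sqrt (real n)) *\<^sub>R I_star g n \<omega> x) ` cube n) (cball 0 c)"
      "hausdorff_dist ((\<lambda>x. (1 / sqrt (real n)) *\<^sub>R I_star g n \<omega> x) ` cube n) (cball 0 c) \<le> \<eta> / 2"
      using hausdorff_dist_scaled_I_star_cube_le[OF _ X(3,4,1) \<open>norm X \<le> \<tau>\<close> _ _ \<open>0 < c\<close>, of \<tau> "\<eta> / 2"]
        elim \<tau> by auto
    then show ?case using \<open>0 < \<eta>\<close> by (simp add: dist_real_def)
  qed
qed

theorem theorem1p1:
  fixes M :: "'w measure" and g :: "'d::finite \<Rightarrow> nat \<Rightarrow> 'w \<Rightarrow> real"
  assumes "prob_space M"
    and "prob_space.indep_vars M (\<lambda>_. borel) (\<lambda>(i, j). g i j) UNIV"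
    and "\<And>i j. distributed M lborel (g i j) std_normal_density"
  shows "AE \<omega> in M.
    (\<lambda>n. hausdorff_dist ((\<lambda>x. (1 / sqrt (real n)) *\<^sub>R I_star g n \<omega> x) ` cube n)
                        (cball (0::real^'d) (sqrt (2 / pi)))) \<longlonglongrightarrow> 0"
proof -
  interpret prob_space M by fact
  obtain D :: "(real^'d) set" where D: "countable D" "closure D = UNIV" "Basis \<subseteq> D"
    by (rule countable_dense_set_with_Basis)
  have "AE \<omega> in M. \<forall>\<theta>\<in>D. (\<lambda>n. mean_abs_proj (\<lambda>i j. g i j \<omega>) n \<theta>) \<longlonglongrightarrow> sqrt (2 / pi) * norm \<theta>"
    using AE_mean_proj_tendsto(1)[OF assms(2,3)] by (simp add: AE_ball_countable[OF \<open>countable D\<close>])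
  moreover have "AE \<omega> in M. \<forall>i k. (\<lambda>n. mean_sq_proj (\<lambda>i j. g i j \<omega>) n (axis i 1 + axis k 1))
      \<longlonglongrightarrow> (norm (axis i 1 + axis k 1 :: real^'d))^2"
    using AE_mean_proj_tendsto(2)[OF assms(2,3)] by (simp add: AE_all_countable)
  ultimately show ?thesis
  proof eventually_elim
    case (elim \<omega>)
    show ?case
    proof (rule hausdorff_dist_scaled_I_star_cube_tendsto)
      show "eventually (\<lambda>n. \<forall>\<theta>. \<bar>mean_abs_proj (\<lambda>i j. g i j \<omega>) n \<theta> - sqrt (2 / pi) * norm \<theta>\<bar>
          \<le> \<epsilon> * norm \<theta>) sequentially" if "0 < \<epsilon>" for \<epsilon>
        using elim(1) D(2,3) that by (intro eventually_mean_abs_proj_close_to_norm) auto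
      show "(\<lambda>n. (1 / real n) *\<^sub>R GGt g n \<omega>) \<longlonglongrightarrow> mat 1"
        using elim(2) by (intro scaled_GGt_tendsto_id) blast
    qed simp
  qed
qed

end
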